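(* Let $\omega\in S_n$. The poset $M_\omega$ contains a parallelogram-pattern poset if and only if $\omega$ contains the pattern $3412$ or the pattern $3421$.
   Context: Permutations $\omega\in S_n$ are written in one-line notation. Let ${\rm Inv}(\omega)=\{(i,j): 1\le i<j\le n,\ \omega(i)>\omega(j)\}$, $c_i(\omega)=\#\{j: i<j\le n,\ \omega(i)>\omega(j)\}$, and for $i<j$, $c_{i,j}(\omega)=\#\{k: i<k<j,\ \omega(i)>\omega(k)\}$; $[m]=\{1,\dots,m\}$. For $i$ with $c_i(\omega)>0$ and $x\in[c_i(\omega)]$, $m_{i,x}(\omega)\in\mathbb{N}^n$ has $j$-th coordinate $0$ if $j<i$; $x$ if $j=i$; $0$ if $j>i$ and $(i,j)\in{\rm Inv}(\omega)$; $\max\{0,x-c_{i,j}(\omega)\}$ if $j>i$ and $(i,j)\notin{\rm Inv}(\omega)$. $M_\omega$ is the set of all such $m_{i,x}(\omega)$, ordered by the product order on $\mathbb{N}^n$. For $1\le i<j\le n$, $b<a$ in $[c_i(\omega)]$ and $c<d$ in $[c_j(\omega)]$ with $a+c=b+d$, the set $\{m_{i,a}(\omega),m_{i,b}(\omega),m_{j,c}(\omega),m_{j,d}(\omega)\}$ is a parallelogram-pattern poset if $m_{i,a}(\omega)>m_{j,d}(\omega)$, $m_{i,b}(\omega)>m_{j,c}(\omega)$, and $m_{i,b}(\omega)$, $m_{j,d}(\omega)$ are incomparable. $\omega$ contains the pattern $3412$ (resp. $3421$) if there exist $i<j<k<l$ with $\omega(k)<\omega(l)<\omega(i)<\omega(j)$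 (resp. $\omega(l)<\omega(k)<\omega(i)<\omega(j)$). *)

theory Defs
  imports "HOL-Combinatorics.Permutations"
begin

text \<open>Permutations of [n] = {1..n} are functions w with w permutes {1..n}
  (one-line notation w(1),...,w(n)). Vectors in N^n are functions nat => nat,
  coordinates indexed 1..n, all other coordinates 0; the product order is then
  the pointwise order on functions.\<close>

definition Inv :: "(nat \<Rightarrow> nat) \<Rightarrow> nat \<Rightarrow> (nat \<times> nat) set" where
  "Inv w n = {(i, j). 1 \<le> i \<and> i < j \<and> j \<le> n \<and> w i > w j}"

definition cc :: "(nat \<Rightarrow> nat) \<Rightarrow> nat \<Rightarrow> nat \<Rightarrow> nat" where
  "cc w n i = card {j. i < j \<and> j \<le> n \<and> w i > w j}"

definition cij :: "(nat \<Rightarrow> nat) \<Rightarrow> nat \<Rightarrow> nat \<Rightarrow> nat" where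
  "cij w i j = card {k. i < k \<and> k < j \<and> w i > w k}"

definition mvec :: "(nat \<Rightarrow> nat) \<Rightarrow> nat \<Rightarrow> nat \<Rightarrow> nat \<Rightarrow> (nat \<Rightarrow> nat)" where
  "mvec w n i x = (\<lambda>j.
     if j < 1 \<or> j > n then 0
     else if j < i then 0
     else if j = i then x
     else if (i, j) \<in> Inv w n then 0
     else nat (max 0 (int x - int (cij w i j))))"


definition Mset :: "(nat \<Rightarrow> nat) \<Rightarrow> nat \<Rightarrow> (nat \<Rightarrow> nat) set" where
  "Mset w n = {mvec w n i x | i x. 1 \<le> i \<and> i \<le> n \<and> 0 < cc w n i \<and> 1 \<le> x \<and> x \<le> cc w n i}"

definition parallelogram_pattern :: "(nat \<Rightarrow> nat) \<Rightarrow> nat \<Rightarrow> (nat \<Rightarrow> nat) set \<Rightarrow> bool" where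
  "parallelogram_pattern w n P \<longleftrightarrow>
     (\<exists>i j a b c d. 1 \<le> i \<and> i < j \<and> j \<le> n \<and>
        1 \<le> b \<and> b < a \<and> a \<le> cc w n i \<and>
        1 \<le> c \<and> c < d \<and> d \<le> cc w n j \<and> a + c = b + d \<and>
        P = {mvec w n i a, mvec w n i b, mvec w n j c, mvec w n j d} \<and>
        mvec w n i a > mvec w n j d \<and> mvec w n i b > mvec w n j c \<and>
        \<not> mvec w n i b \<le> mvec w n j d \<and> \<not> mvec w n j d \<le> mvec w n i b)"

definition contains_parallelogram :: "(nat \<Rightarrow> nat) \<Rightarrow> nat \<Rightarrow> bool" where
  "contains_parallelogram w n \<longleftrightarrow> (\<exists>P \<subseteq> Mset w n. parallelogram_pattern w n P)"

definition contains_3412 :: "(nat \<Rightarrow> nat) \<Rightarrow> nat \<Rightarrow> bool" where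
  "contains_3412 w n \<longleftrightarrow> (\<exists>i j k l. 1 \<le> i \<and> i < j \<and> j < k \<and> k < l \<and> l \<le> n \<and>
      w k < w l \<and> w l < w i \<and> w i < w j)"

definition contains_3421 :: "(nat \<Rightarrow> nat) \<Rightarrow> nat \<Rightarrow> bool" where
  "contains_3421 w n \<longleftrightarrow> (\<exists>i j k l. 1 \<le> i \<and> i < j \<and> j < k \<and> k < l \<and> l \<le> n \<and>
      w l < w k \<and> w k < w i \<and> w i < w j)"

end

theory Submission
  imports Defs
begin

text \<open>
  For positions i < j the vectors of M_w compare by a simple
  rule (lemma mvec_le_iff): m_{j,d} \<le> m_{i,a} holds exactly when w(i) < w(j)
  and d + c_{i,j} \<le> a, while m_{i,x} is never below m_{j,y} because it is
  nonzero at coordinate i.  Splitting c_i = c_{i,j} + #(low_tail i j), where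
  low_tail i j collects the positions k \<ge> j with w(k) < w(i), a
  parallelogram on rows i, j exists iff w(i) < w(j) and low_tail i j has at
  least two elements; the pattern m_{i,e+2}, m_{i,e+1}, m_{j,1}, m_{j,2} with
  e = c_{i,j} is then a witness.  Two such positions k < l after j together
  with i, j form an occurrence of 3412 or 3421, depending on how w(k) and
  w(l) compare; the common shape is named contains_34xx.
\<close>

lemma mvec_at_start: "1 \<le> i \<Longrightarrow> i \<le> n \<Longrightarrow> mvec w n i x i = x"
  by (simp add: mvec_def)

lemma mvec_before: "k < j \<Longrightarrow> mvec w n j x k = 0"
  by (simp add: mvec_def)

text \<open>A vector of an earlier row is nonzero where a later row vanishes, so it
  is never below (in particular never equal to) a vector of a later row.\<close>

lemma mvec_earlier_not_le:
  assumes "1 \<le> i" "i < j" "i \<le> n" "1 \<le> x"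
  shows "\<not> mvec w n i x \<le> mvec w n j y"
proof
  assume "mvec w n i x \<le> mvec w n j y"
  then have "mvec w n i x i \<le> mvec w n j y i" by (simp add: le_fun_def)
  with assms show False by (simp add: mvec_at_start mvec_before)
qed

lemma mvec_later_less:
  assumes "1 \<le> i" "i < j" "i \<le> n" "1 \<le> x" "mvec w n j y \<le> mvec w n i x"
  shows "mvec w n j y < mvec w n i x"
  using assms mvec_earlier_not_le[OF assms(1-4), of w y] by (auto simp: less_le)

text \<open>An entry smaller than w(i) lying between i and x lies either before j
  (counted by c_{i,j}) or after j, where it is also smaller than w(j).\<close>

lemma cij_le_split:
  assumes "i < j" "j < x" "w i < w j"
  shows "cij w i x \<le> cij w i j + cij w j x"
proof -
  have "{k. i < k \<and> k < x \<and> w i > w k}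
          \<subseteq> {k. i < k \<and> k < j \<and> w i > w k} \<union> {k. j < k \<and> k < x \<and> w j > w k}"
  proof
    fix k assume k: "k \<in> {k. i < k \<and> k < x \<and> w i > w k}"
    then have "k \<noteq> j" using assms by auto
    with k assms show "k \<in> {k. i < k \<and> k < j \<and> w i > w k} \<union> {k. j < k \<and> k < x \<and> w j > w k}"
      by auto
  qed
  then have "cij w i x \<le> card ({k. i < k \<and> k < j \<and> w i > w k} \<union> {k. j < k \<and> k < x \<and> w j > w k})"
    unfolding cij_def by (intro card_mono) auto
  also have "\<dots> \<le> cij w i j + cij w j x"
    unfolding cij_def by (rule card_Un_le)
  finally show ?thesis .
qed

definition low_tail :: "(nat \<Rightarrow> nat) \<Rightarrow> nat \<Rightarrow> nat \<Rightarrow> nat \<Rightarrow> nat set" where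
  "low_tail w n i j = {k. j \<le> k \<and> k \<le> n \<and> w k < w i}"

lemma finite_low_tail: "finite (low_tail w n i j)"
  unfolding low_tail_def by simp

lemma cc_split:
  assumes "i < j" "j \<le> n"
  shows "cc w n i = cij w i j + card (low_tail w n i j)"
proof -
  have "{k. i < k \<and> k \<le> n \<and> w i > w k}
          = {k. i < k \<and> k < j \<and> w i > w k} \<union> low_tail w n i j"
    using assms by (auto simp: low_tail_def)
  moreover have "card ({k. i < k \<and> k < j \<and> w i > w k} \<union> low_tail w n i j)
                   = cij w i j + card (low_tail w n i j)"
    unfolding cij_def by (rule card_Un_disjoint) (auto simp: low_tail_def)
  ultimately show ?thesis unfolding cc_def by simp
qed

text \<open>If w(i) < w(j), every entry of low_tail i j is an inversion of j.\<close>

lemma card_low_tail_le_cc: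
  assumes "w i < w j"
  shows "card (low_tail w n i j) \<le> cc w n j"
  unfolding cc_def
proof (rule card_mono)
  show "low_tail w n i j \<subseteq> {k. j < k \<and> k \<le> n \<and> w j > w k}"
    using assms by (auto simp: low_tail_def order_le_less)
qed simp

lemma mvec_in_Mset:
  "1 \<le> i \<Longrightarrow> i \<le> n \<Longrightarrow> 1 \<le> x \<Longrightarrow> x \<le> cc w n i \<Longrightarrow> mvec w n i x \<in> Mset w n"
  unfolding Mset_def by (intro CollectI exI[of _ i] exI[of _ x]) simp

text \<open>Coordinate j forces
  (i,j) not to be an inversion and d + c_{i,j} \<le> a; conversely, beyond j the
  vector m_{j,d} lives only on non-inversions of j, which are non-inversions
  of i, and there cij_le_split bounds the loss of m_{i,a}.\<close>

lemma mvec_le_iff: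
  assumes inj: "inj w" and ij: "1 \<le> i" "i < j" "j \<le> n" and d: "1 \<le> d"
  shows "mvec w n j d \<le> mvec w n i a \<longleftrightarrow> w i < w j \<and> d + cij w i j \<le> a"
proof
  assume "mvec w n j d \<le> mvec w n i a"
  then have "mvec w n j d j \<le> mvec w n i a j" by (simp add: le_fun_def)
  then have at_j: "d \<le> mvec w n i a j" using ij by (simp add: mvec_at_start)
  have no_inv: "(i, j) \<notin> Inv w n"
    using at_j d ij by (auto simp: mvec_def)
  moreover have "w i \<noteq> w j" using inj ij by (metis injD less_irrefl)
  ultimately have "w i < w j" using ij by (auto simp: Inv_def)
  moreover have "d + cij w i j \<le> a"
    using at_j d ij no_inv by (auto simp: mvec_def)
  ultimately show "w i < w j \<and> d + cij w i j \<le> a" by simp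
next
  assume "w i < w j \<and> d + cij w i j \<le> a"
  then have wij: "w i < w j" and da: "d + cij w i j \<le> a" by auto
  show "mvec w n j d \<le> mvec w n i a"
    unfolding le_fun_def
  proof
    fix x
    consider "x < j \<or> x > n" | "x = j" | "j < x" "x \<le> n" "(j, x) \<in> Inv w n"
      | "j < x" "x \<le> n" "(j, x) \<notin> Inv w n" by fastforce
    then show "mvec w n j d x \<le> mvec w n i a x"
    proof cases
      case 2
      then show ?thesis using wij ij da by (simp add: mvec_def Inv_def)
    next
      case 4
      then have "(i, x) \<notin> Inv w n" using wij ij by (auto simp: Inv_def)
      moreover have "cij w i x \<le> cij w i j + cij w j x"
        using cij_le_split[OF ij(2) 4(1) wij] .
      ultimately show ?thesis using 4 ij da by (auto simp: mvec_def)
    qed (auto simp: mvec_def)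
  qed
qed

text \<open>In a parallelogram on rows i < j, m_{j,c} < m_{i,b} yields w(i) < w(j) and
  b \<ge> c_{i,j} + 1, so c_i \<ge> a > b leaves at least two entries for low_tail.\<close>

lemma parallelogram_gives_low_tail:
  assumes inj: "inj w" and "parallelogram_pattern w n P"
  shows "\<exists>i j. 1 \<le> i \<and> i < j \<and> j \<le> n \<and> w i < w j \<and> 2 \<le> card (low_tail w n i j)"
proof -
  obtain i j a b c where ij: "1 \<le> i" "i < j" "j \<le> n"
    and abc: "1 \<le> c" "b < a" "a \<le> cc w n i" and below: "mvec w n j c < mvec w n i b"
    using assms(2) unfolding parallelogram_pattern_def by blast
  have "mvec w n j c \<le> mvec w n i b" using below by (rule less_imp_le)
  then have "w i < w j \<and> c + cij w i j \<le> b"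
    using mvec_le_iff[OF inj ij abc(1)] by simp
  moreover have "cc w n i = cij w i j + card (low_tail w n i j)"
    using cc_split[OF ij(2,3)] .
  ultimately show ?thesis using ij abc by (intro exI[of _ i] exI[of _ j]) auto
qed

text \<open>Conversely, with e = c_{i,j}, the vectors m_{i,e+2}, m_{i,e+1}, m_{j,1},
  m_{j,2} form a parallelogram whenever low_tail i j has two elements.\<close>

lemma low_tail_gives_parallelogram:
  assumes inj: "inj w" and ij: "1 \<le> i" "i < j" "j \<le> n" "w i < w j"
    and two: "2 \<le> card (low_tail w n i j)"
  shows "contains_parallelogram w n"
proof -
  define e where "e = cij w i j"
  have in_range: "i \<le> n" "1 \<le> j" using ij by simp_all
  have cc_i: "e + 2 \<le> cc w n i" using cc_split[OF ij(2,3), of w] two by (simp add: e_def)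
  have cc_j: "2 \<le> cc w n j" using card_low_tail_le_cc[where w=w and i=i and j=j and n=n, OF ij(4)] two by simp
  have le_fact: "mvec w n j d \<le> mvec w n i a \<longleftrightarrow> d + e \<le> a" if "1 \<le> d" for d a
    using mvec_le_iff[OF inj ij(1-3) that] ij(4) by (simp add: e_def)
  have top: "mvec w n j 2 < mvec w n i (e + 2)"
    by (rule mvec_later_less) (use ij in_range le_fact in auto)
  have bottom: "mvec w n j 1 < mvec w n i (e + 1)"
    by (rule mvec_later_less) (use ij in_range le_fact in auto)
  have incomparable: "\<not> mvec w n i (e + 1) \<le> mvec w n j 2" "\<not> mvec w n j 2 \<le> mvec w n i (e + 1)"
    using mvec_earlier_not_le[OF ij(1,2) in_range(1)] le_fact[of 2 "e + 1"] by auto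
  let ?P = "{mvec w n i (e + 2), mvec w n i (e + 1), mvec w n j 1, mvec w n j 2}"
  have "parallelogram_pattern w n ?P"
    unfolding parallelogram_pattern_def
    by (rule exI[of _ i], rule exI[of _ j], rule exI[of _ "e + 2"], rule exI[of _ "e + 1"],
        rule exI[of _ 1], rule exI[of _ 2]) (use ij cc_i cc_j top bottom incomparable in simp)
  moreover have "?P \<subseteq> Mset w n"
    using ij in_range cc_i cc_j by (simp add: mvec_in_Mset)
  ultimately show ?thesis unfolding contains_parallelogram_def by blast
qed

lemma two_le_card_iff_pair:
  assumes "finite A"
  shows "2 \<le> card A \<longleftrightarrow> (\<exists>k l. k \<in> A \<and> l \<in> A \<and> k < (l::nat))"
proof
  assume "2 \<le> card A"
  then obtain B where "B \<subseteq> A" "card B = 2" using assms by (meson obtain_subset_with_card_n)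
  then obtain x y where "x \<noteq> y" "x \<in> A" "y \<in> A" by (auto simp: card_2_iff)
  then show "\<exists>k l. k \<in> A \<and> l \<in> A \<and> k < l" by (metis linorder_neqE_nat)
next
  assume "\<exists>k l. k \<in> A \<and> l \<in> A \<and> k < l"
  then obtain k l where "k \<in> A" "l \<in> A" "k < l" by blast
  then have "card {k, l} \<le> card A" using assms by (intro card_mono) auto
  with \<open>k < l\<close> show "2 \<le> card A" by simp
qed

text \<open>Since w(j) > w(i), position j itself never lies in low_tail i j, so
  low_tail i j has two elements iff two positions after j carry values
  below w(i).\<close>

lemma two_le_card_low_tail_iff:
  assumes "w i < w j"
  shows "2 \<le> card (low_tail w n i j)
           \<longleftrightarrow> (\<exists>k l. j < k \<and> k < l \<and> l \<le> n \<and> w k < w i \<and> w l < w i)"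
proof -
  let ?T = "{k. j < k \<and> k \<le> n \<and> w k < w i}"
  have tail: "low_tail w n i j = ?T"
    using assms by (auto simp: low_tail_def nat_less_le)
  show ?thesis
    unfolding two_le_card_iff_pair[OF finite_low_tail] unfolding tail
  proof (intro iffI; elim exE conjE)
    fix k l assume "k \<in> ?T" "l \<in> ?T" "k < l"
    then show "\<exists>k l. j < k \<and> k < l \<and> l \<le> n \<and> w k < w i \<and> w l < w i" by auto
  next
    fix k l assume "j < k" "k < l" "l \<le> n" "w k < w i" "w l < w i"
    then show "\<exists>k l. k \<in> ?T \<and> l \<in> ?T \<and> k < l"
      by (intro exI[of _ k] exI[of _ l]) simp
  qed
qed

definition contains_34xx :: "(nat \<Rightarrow> nat) \<Rightarrow> nat \<Rightarrow> bool" where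
  "contains_34xx w n \<longleftrightarrow> (\<exists>i j k l. 1 \<le> i \<and> i < j \<and> j < k \<and> k < l \<and> l \<le> n \<and>
      w i < w j \<and> w k < w i \<and> w l < w i)"

lemma low_tail_pair_iff_34xx:
  "(\<exists>i j. 1 \<le> i \<and> i < j \<and> j \<le> n \<and> w i < w j \<and> 2 \<le> card (low_tail w n i j))
     \<longleftrightarrow> contains_34xx w n"
  unfolding contains_34xx_def
proof (intro iffI; elim exE conjE)
  fix i j assume ij: "1 \<le> i" "i < j" "j \<le> n" "w i < w j" "2 \<le> card (low_tail w n i j)"
  then obtain k l where "j < k" "k < l" "l \<le> n" "w k < w i" "w l < w i"
    using two_le_card_low_tail_iff[where w=w and i=i and j=j, OF ij(4)] by blast
  with ij show "\<exists>i j k l. 1 \<le> i \<and> i < j \<and> j < k \<and> k < l \<and> l \<le> n \<and>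
      w i < w j \<and> w k < w i \<and> w l < w i" by blast
next
  fix i j k l assume ijkl: "1 \<le> i" "i < j" "j < k" "k < l" "l \<le> n" "w i < w j" "w k < w i" "w l < w i"
  then have "2 \<le> card (low_tail w n i j)"
    using two_le_card_low_tail_iff[where w=w and i=i and j=j, OF ijkl(6)] by blast
  with ijkl show "\<exists>i j. 1 \<le> i \<and> i < j \<and> j \<le> n \<and> w i < w j \<and> 2 \<le> card (low_tail w n i j)"
    by (intro exI[of _ i] exI[of _ j]) simp
qed

lemma contains_34xx_iff:
  assumes inj: "inj w"
  shows "contains_34xx w n \<longleftrightarrow> contains_3412 w n \<or> contains_3421 w n"
proof
  assume "contains_34xx w n"
  then obtain i j k l where ijkl: "1 \<le> i" "i < j" "j < k" "k < l" "l \<le> n"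
      "w i < w j" "w k < w i" "w l < w i"
    unfolding contains_34xx_def by blast
  have "w k \<noteq> w l" using inj \<open>k < l\<close> by (metis injD less_irrefl)
  then consider "w k < w l" | "w l < w k" by linarith
  then show "contains_3412 w n \<or> contains_3421 w n"
  proof cases
    case 1
    then have "contains_3412 w n"
      unfolding contains_3412_def using ijkl by (intro exI[of _ i] exI[of _ j] exI[of _ k] exI[of _ l]) simp
    then show ?thesis ..
  next
    case 2
    then have "contains_3421 w n"
      unfolding contains_3421_def using ijkl by (intro exI[of _ i] exI[of _ j] exI[of _ k] exI[of _ l]) simp
    then show ?thesis ..
  qed
next
  assume "contains_3412 w n \<or> contains_3421 w n"
  then obtain i j k l where "1 \<le> i" "i < j" "j < k" "k < l" "l \<le> n"
      "w i < w j" "w k < w i" "w l < w i"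
    unfolding contains_3412_def contains_3421_def by (elim disjE exE conjE) auto
  then show "contains_34xx w n"
    unfolding contains_34xx_def by (intro exI[of _ i] exI[of _ j] exI[of _ k] exI[of _ l]) simp
qed

theorem mainTheorem8:
  fixes w :: "nat \<Rightarrow> nat" and n :: nat
  assumes "w permutes {1..n}"
  shows "contains_parallelogram w n \<longleftrightarrow> contains_3412 w n \<or> contains_3421 w n"
proof -
  have inj: "inj w" using assms by (rule permutes_inj)
  have "contains_parallelogram w n
      \<longleftrightarrow> (\<exists>i j. 1 \<le> i \<and> i < j \<and> j \<le> n \<and> w i < w j \<and> 2 \<le> card (low_tail w n i j))"
    using parallelogram_gives_low_tail[OF inj] low_tail_gives_parallelogram[OF inj]
    unfolding contains_parallelogram_def by blast
  also have "\<dots> \<longleftrightarrow> contains_3412 w n \<or> contains_3421 w n"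
    unfolding low_tail_pair_iff_34xx by (rule contains_34xx_iff[OF inj])
  finally show ?thesis .
qed

end
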